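(* Let $f(z)=\sum_{j\ge 1} b_j z^j$ be analytic in $\mathbb{D}$ with $\|f\|_{\mathcal{B}}\le 1$ and $b_j\ge 0$ for all $j\ge 1$. Then for every integer $n\ge 2$, $$ \mathcal{F}_n(f)=\sum_{k=1}^n k|b_k|^2\le n B_n^2, $$ and equality holds only for $f(z)=B_n z^n$.
   Context: $\mathbb{D}$ is the open unit disc. The Bloch space $\mathcal{B}$ consists of analytic functions $f$ on $\mathbb{D}$ with finite norm $\|f\|_{\mathcal{B}}=|f(0)|+\sup_{z\in\mathbb{D}}(1-|z|^2)|f'(z)|$. For $n\ge 2$, $B_n=\frac{n+1}{2n}\left(\frac{n+1}{n-1}\right)^{(n-1)/2}$ (this is the sharp bound for $|b_n|$ over functions $f=\sum_{k\ge1}b_kz^k$ with $\|f\|_{\mathcal{B}}\le 1$), and $B_1=1$. *)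

theory Defs
  imports "HOL-Analysis.Analysis"
begin

definition in_Bloch :: "(complex \<Rightarrow> complex) \<Rightarrow> bool" where
  "in_Bloch f \<longleftrightarrow> f holomorphic_on ball 0 1 \<and>
     bdd_above ((\<lambda>z. (1 - (cmod z)\<^sup>2) * cmod (deriv f z)) ` ball 0 1)"

definition bloch_norm :: "(complex \<Rightarrow> complex) \<Rightarrow> real" where
  "bloch_norm f = cmod (f 0) + (SUP z\<in>ball 0 1. (1 - (cmod z)\<^sup>2) * cmod (deriv f z))"

definition Bconst :: "nat \<Rightarrow> real" where
  "Bconst n = (if n = 1 then 1 else
     (real n + 1) / (2 * real n) * ((real n + 1) / (real n - 1)) powr ((real n - 1) / 2))"

end

theory Submission
  imports Defs
begin

text \<open>For 0 <= r < 1 the nonnegative coefficients give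
  (1 - r^2) * sum_k k b_k r^(k-1) = (1 - r^2) f'(r) <= 1.
  At the radius r_k = sqrt ((k - 1) / (k + 1)), where k r^(k-1) (1 - r^2) attains its maximum
  1 / B_k, the single term k yields b_k <= B_k <= B_n (B is increasing), while the terms
  k <= n at r_n, using r^(k-1) >= r^(n-1), yield sum_{k<=n} k b_k <= n B_n.
  Hence sum_{k<=n} k b_k^2 <= B_n * sum_{k<=n} k b_k <= n B_n^2. In the case of equality the
  chain of estimates at r_n is tight, which forces b_k = 0 for all k \<noteq> n.\<close>

lemma deriv_sums_of_powser:
  fixes a :: "nat \<Rightarrow> complex"
  assumes f: "\<And>z. z \<in> ball 0 1 \<Longrightarrow> (\<lambda>j. a j * z ^ j) sums f z"
    and z: "z \<in> ball 0 1"
  shows "(\<lambda>j. of_nat j * a j * z ^ (j - 1)) sums deriv f z"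
proof -
  have summable: "summable (\<lambda>j. a j * w ^ j)" if "norm w < 1" for w
    using f[of w] that by (auto simp: sums_iff)
  have "((\<lambda>w. \<Sum>j. a j * w ^ j) has_field_derivative (\<Sum>j. diffs a j * z ^ j)) (at z)"
    by (rule termdiffs_strong'[where K = 1]) (use summable z in auto)
  then have "(f has_field_derivative (\<Sum>j. diffs a j * z ^ j)) (at z)"
    by (rule has_field_derivative_transform_within_open[OF _ open_ball z])
       (use f in \<open>simp add: sums_iff\<close>)
  moreover have "summable (\<lambda>j. diffs a j * z ^ j)"
    by (rule termdiff_converges[where K = 1]) (use summable z in auto)
  ultimately have "(\<lambda>j. diffs a j * z ^ j) sums deriv f z"
    by (simp add: DERIV_imp_deriv summable_sums)
  then have "(\<lambda>j. of_nat (Suc j) * a (Suc j) * z ^ (Suc j - 1)) sums deriv f z"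
    by (simp add: diffs_def)
  then show ?thesis
    using sums_Suc_iff[of "\<lambda>j. of_nat j * a j * z ^ (j - 1)"] by simp
qed

lemma Bloch_deriv_bound:
  assumes "in_Bloch f" "z \<in> ball 0 1"
  shows "(1 - (cmod z)\<^sup>2) * cmod (deriv f z) \<le> bloch_norm f"
proof -
  have "(1 - (cmod z)\<^sup>2) * cmod (deriv f z) \<le> (SUP w\<in>ball 0 1. (1 - (cmod w)\<^sup>2) * cmod (deriv f w))"
    using assms unfolding in_Bloch_def by (intro cSUP_upper) auto
  then show ?thesis
    unfolding bloch_norm_def using norm_ge_zero[of "f 0"] by linarith
qed

lemma ln_ge_two_diff_div_add:
  fixes y :: real
  assumes "1 \<le> y"
  shows "2 * (y - 1) / (y + 1) \<le> ln y"
proof -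
  define g where "g t = ln t - 2 * (t - 1) / (t + 1)" for t :: real
  have "g 1 \<le> g y"
  proof (rule DERIV_nonneg_imp_nondecreasing[OF assms])
    fix t :: real assume t: "1 \<le> t" "t \<le> y"
    have "(g has_real_derivative 1 / t - 4 / (t + 1)\<^sup>2) (at t)"
      unfolding g_def using t by (auto intro!: derivative_eq_intros simp: power2_eq_square)
    moreover have "1 / t - 4 / (t + 1)\<^sup>2 = (t - 1)\<^sup>2 / (t * (t + 1)\<^sup>2)"
      using t by (simp add: divide_simps) algebra
    ultimately show "\<exists>d. (g has_real_derivative d) (at t) \<and> 0 \<le> d"
      using t by fastforce
  qed
  then show ?thesis by (simp add: g_def)
qed

definition ln_Bconst_real :: "real \<Rightarrow> real" where
  "ln_Bconst_real x = ln (x + 1) - ln (2 * x) + (x - 1) / 2 * (ln (x + 1) - ln (x - 1))"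

lemma Bconst_eq_exp_ln_Bconst_real:
  assumes "2 \<le> k"
  shows "Bconst k = exp (ln_Bconst_real (real k))"
  using assms by (simp add: Bconst_def ln_Bconst_real_def exp_add exp_diff powr_def ln_div)

lemma ln_Bconst_real_has_real_derivative:
  assumes "1 < x"
  shows "(ln_Bconst_real has_real_derivative (ln (x + 1) - ln (x - 1)) / 2 - 1 / x) (at x)"
proof -
  have product_rule_term: "(1 / (x + 1) - 1 / (x - 1)) * (x - 1) = - 2 / (x + 1)"
    using assms by (simp add: divide_simps)
  show ?thesis
    unfolding ln_Bconst_real_def[abs_def] using assms
    by (auto intro!: derivative_eq_intros)
      (simp only: product_rule_term, simp add: diff_divide_distrib add_divide_distrib, simp add: field_simps)
qed

lemma ln_Bconst_real_mono:
  assumes "1 < x" "x \<le> y"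
  shows "ln_Bconst_real x \<le> ln_Bconst_real y"
proof (rule DERIV_nonneg_imp_nondecreasing[OF assms(2)])
  fix t assume t: "x \<le> t" "t \<le> y"
  with assms have "1 < t" by simp
  have "2 / t = 2 * ((t + 1) / (t - 1) - 1) / ((t + 1) / (t - 1) + 1)"
    using \<open>1 < t\<close> by (simp add: field_simps)
  also have "\<dots> \<le> ln ((t + 1) / (t - 1))"
    using \<open>1 < t\<close> by (intro ln_ge_two_diff_div_add) simp
  also have "\<dots> = ln (t + 1) - ln (t - 1)"
    using \<open>1 < t\<close> by (simp add: ln_div)
  finally show "\<exists>d. (ln_Bconst_real has_real_derivative d) (at t) \<and> 0 \<le> d"
    using ln_Bconst_real_has_real_derivative[OF \<open>1 < t\<close>] by fastforce
qed

lemma Bconst_ge_1: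
  assumes "1 \<le> n"
  shows "1 \<le> Bconst n"
proof (cases "n = 1")
  case False
  have "4 / 3 \<le> sqrt 3"
    by (rule real_le_rsqrt) (simp add: power2_eq_square)
  then have "1 \<le> Bconst 2"
    by (simp add: Bconst_def powr_half_sqrt)
  also have "\<dots> \<le> Bconst n"
    using False assms ln_Bconst_real_mono[of 2 "real n"] by (simp add: Bconst_eq_exp_ln_Bconst_real)
  finally show ?thesis .
qed (simp add: Bconst_def)

lemma Bconst_mono:
  assumes "1 \<le> k" "k \<le> n"
  shows "Bconst k \<le> Bconst n"
proof (cases "k = 1")
  case True
  then show ?thesis using Bconst_ge_1 assms by (simp add: Bconst_def)
next
  case False
  then show ?thesis
    using assms ln_Bconst_real_mono[of "real k" "real n"] by (simp add: Bconst_eq_exp_ln_Bconst_real)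
qed

text \<open>\<open>peak_radius k\<close> maximises r^(k-1) (1 - r^2) over 0 <= r < 1, with maximum 1 / (k B_k).\<close>

definition peak_radius :: "nat \<Rightarrow> real" where
  "peak_radius k = sqrt ((real k - 1) / (real k + 1))"

lemma peak_radius_nonneg: "1 \<le> k \<Longrightarrow> 0 \<le> peak_radius k"
  by (simp add: peak_radius_def)

lemma peak_radius_pos: "2 \<le> k \<Longrightarrow> 0 < peak_radius k"
  by (simp add: peak_radius_def)

lemma peak_radius_less_1: "1 \<le> k \<Longrightarrow> peak_radius k < 1"
  by (simp add: peak_radius_def)

lemma Bconst_peak_radius:
  assumes "1 \<le> k"
  shows "real k * peak_radius k ^ (k - 1) * (1 - (peak_radius k)\<^sup>2) * Bconst k = 1"
proof (cases "k = 1")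
  case False
  define q where "q = (real k - 1) / (real k + 1)"
  define e where "e = (real k - 1) / 2"
  have q: "0 < q" using assms False by (simp add: q_def)
  have "peak_radius k ^ (k - 1) = q powr e"
    using q assms by (simp add: peak_radius_def q_def[symmetric] e_def powr_half_sqrt[symmetric]
        powr_realpow[symmetric] powr_powr of_nat_diff)
  moreover have "1 - (peak_radius k)\<^sup>2 = 2 / (real k + 1)"
    using q by (simp add: peak_radius_def q_def[symmetric]) (simp add: q_def field_simps)
  moreover have "Bconst k = (real k + 1) / (2 * real k) / q powr e"
    using False by (simp add: Bconst_def q_def e_def powr_divide)
  ultimately have "real k * peak_radius k ^ (k - 1) * (1 - (peak_radius k)\<^sup>2) * Bconst k
      = real k * q powr e * (2 / (real k + 1)) * ((real k + 1) / (2 * real k) / q powr e)"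
    by (simp only:)
  also have "\<dots> = 1"
    using q assms by (simp add: divide_simps)
  finally show ?thesis .
qed (simp add: Bconst_def peak_radius_def)

lemma le_if_mult_le_1:
  fixes x c B :: real
  assumes "x * c \<le> 1" "c * B = 1" "0 < B"
  shows "x \<le> B"
proof -
  have "c = 1 / B" using assms(2,3) by (simp add: field_simps)
  then show ?thesis using assms(1,3) by (simp add: pos_divide_le_eq)
qed

locale nonneg_Bloch_series =
  fixes f :: "complex \<Rightarrow> complex" and b :: "nat \<Rightarrow> real"
  assumes sums_f: "\<And>z. z \<in> ball 0 1 \<Longrightarrow> (\<lambda>j. complex_of_real (b j) * z ^ j) sums f z"
    and Bloch: "in_Bloch f"
    and bloch_norm_le_1: "bloch_norm f \<le> 1"
    and coeff_nonneg: "\<And>j. 1 \<le> j \<Longrightarrow> 0 \<le> b j"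
begin

lemma weighted_coeff_nonneg: "0 \<le> r \<Longrightarrow> 0 \<le> real k * b k * r ^ (k - 1)"
  using coeff_nonneg[of k] by (cases k) auto

lemma radial_deriv_sums:
  assumes "\<bar>r\<bar> < 1"
  shows "(\<lambda>k. real k * b k * r ^ (k - 1)) sums Re (deriv f (of_real r))"
proof -
  have "(\<lambda>k. of_nat k * of_real (b k) * of_real r ^ (k - 1)) sums deriv f (of_real r)"
    by (rule deriv_sums_of_powser[OF sums_f]) (use assms in auto)
  from sums_Re[OF this] show ?thesis by simp
qed

lemma radial_deriv_bound:
  assumes "0 \<le> r" "r < 1"
  shows "(1 - r\<^sup>2) * Re (deriv f (of_real r)) \<le> 1"
proof -
  have "(1 - r\<^sup>2) * Re (deriv f (of_real r)) \<le> (1 - r\<^sup>2) * cmod (deriv f (of_real r))"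
    using assms by (intro mult_left_mono complex_Re_le_cmod) (simp add: power_le_one)
  also have "\<dots> = (1 - (cmod (of_real r))\<^sup>2) * cmod (deriv f (of_real r))"
    by simp
  also have "\<dots> \<le> bloch_norm f"
    by (rule Bloch_deriv_bound[OF Bloch]) (use assms in simp)
  finally show ?thesis using bloch_norm_le_1 by simp
qed

lemma weighted_coeff_sum_le:
  assumes "0 \<le> r" "r < 1" "finite K"
  shows "(1 - r\<^sup>2) * (\<Sum>k\<in>K. real k * b k * r ^ (k - 1)) \<le> 1"
proof -
  have sums: "(\<lambda>k. real k * b k * r ^ (k - 1)) sums Re (deriv f (of_real r))"
    using assms by (intro radial_deriv_sums) simp
  have "(\<Sum>k\<in>K. real k * b k * r ^ (k - 1)) \<le> (\<Sum>k. real k * b k * r ^ (k - 1))"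
    using sums_summable[OF sums] assms(3) by (rule sum_le_suminf) (use assms(1) weighted_coeff_nonneg in blast)
  also have "\<dots> = Re (deriv f (of_real r))"
    using sums by (rule sums_unique[symmetric])
  finally have "(\<Sum>k\<in>K. real k * b k * r ^ (k - 1)) \<le> Re (deriv f (of_real r))" .
  then have "(1 - r\<^sup>2) * (\<Sum>k\<in>K. real k * b k * r ^ (k - 1)) \<le> (1 - r\<^sup>2) * Re (deriv f (of_real r))"
    using assms by (intro mult_left_mono) (simp_all add: power_le_one)
  also have "\<dots> \<le> 1"
    using assms(1,2) by (rule radial_deriv_bound)
  finally show ?thesis .
qed

lemma weighted_coeff_sum_less:
  assumes "0 < r" "r < 1" "finite K" "j \<notin> K" "1 \<le> j" "0 < b j"
  shows "(1 - r\<^sup>2) * (\<Sum>k\<in>K. real k * b k * r ^ (k - 1)) < 1"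
proof -
  have "(\<Sum>k\<in>K. real k * b k * r ^ (k - 1)) < (\<Sum>k\<in>insert j K. real k * b k * r ^ (k - 1))"
    using assms by simp
  then have "(1 - r\<^sup>2) * (\<Sum>k\<in>K. real k * b k * r ^ (k - 1))
      < (1 - r\<^sup>2) * (\<Sum>k\<in>insert j K. real k * b k * r ^ (k - 1))"
    using assms by (intro mult_strict_left_mono) (simp_all add: power_less_one_iff abs_square_less_1)
  also have "\<dots> \<le> 1"
    using assms by (intro weighted_coeff_sum_le) simp_all
  finally show ?thesis .
qed

lemma coeff_le_Bconst:
  assumes "1 \<le> k"
  shows "b k \<le> Bconst k"
proof (rule le_if_mult_le_1)
  let ?r = "peak_radius k"
  show "b k * (real k * ?r ^ (k - 1) * (1 - ?r\<^sup>2)) \<le> 1"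
    using weighted_coeff_sum_le[of ?r "{k}"] peak_radius_nonneg[OF assms] peak_radius_less_1[OF assms]
    by (simp add: algebra_simps)
  show "real k * ?r ^ (k - 1) * (1 - ?r\<^sup>2) * Bconst k = 1"
    using assms by (rule Bconst_peak_radius)
  show "0 < Bconst k"
    using Bconst_ge_1[OF assms] by simp
qed

lemma first_moment_mult_power_le:
  assumes "0 \<le> r" "r \<le> 1"
  shows "(\<Sum>k=1..n. real k * b k) * r ^ (n - 1) \<le> (\<Sum>k=1..n. real k * b k * r ^ (k - 1))"
  unfolding sum_distrib_right
proof (rule sum_mono)
  fix k assume k: "k \<in> {1..n}"
  show "real k * b k * r ^ (n - 1) \<le> real k * b k * r ^ (k - 1)"
  proof (rule mult_left_mono)
    show "r ^ (n - 1) \<le> r ^ (k - 1)"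
      using k assms by (intro power_decreasing) auto
    show "0 \<le> real k * b k"
      using k coeff_nonneg[of k] by simp
  qed
qed

lemma first_moment_mult_power_less:
  assumes "0 < r" "r < 1" "1 \<le> j" "j < n" "0 < b j"
  shows "(\<Sum>k=1..n. real k * b k) * r ^ (n - 1) < (\<Sum>k=1..n. real k * b k * r ^ (k - 1))"
  unfolding sum_distrib_right
proof (rule sum_strict_mono_ex1)
  show "\<forall>k\<in>{1..n}. real k * b k * r ^ (n - 1) \<le> real k * b k * r ^ (k - 1)"
    using assms coeff_nonneg by (auto intro!: mult_left_mono power_decreasing)
  show "\<exists>k\<in>{1..n}. real k * b k * r ^ (n - 1) < real k * b k * r ^ (k - 1)"
    using assms by (intro bexI[of _ j]) (auto intro!: power_strict_decreasing)
qed simp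

lemma first_moment_le:
  assumes "1 \<le> n"
  shows "(\<Sum>k=1..n. real k * b k) \<le> real n * Bconst n"
proof (rule le_if_mult_le_1)
  let ?r = "peak_radius n"
  have r: "0 \<le> ?r" "?r < 1"
    using assms peak_radius_nonneg peak_radius_less_1 by auto
  have "(\<Sum>k=1..n. real k * b k) * (?r ^ (n - 1) * (1 - ?r\<^sup>2))
      = (1 - ?r\<^sup>2) * ((\<Sum>k=1..n. real k * b k) * ?r ^ (n - 1))"
    by (simp add: mult_ac)
  also have "\<dots> \<le> (1 - ?r\<^sup>2) * (\<Sum>k=1..n. real k * b k * ?r ^ (k - 1))"
    using r by (intro mult_left_mono first_moment_mult_power_le) (simp_all add: power_le_one)
  also have "\<dots> \<le> 1"
    using r by (intro weighted_coeff_sum_le) simp_all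
  finally show "(\<Sum>k=1..n. real k * b k) * (?r ^ (n - 1) * (1 - ?r\<^sup>2)) \<le> 1" .
  show "?r ^ (n - 1) * (1 - ?r\<^sup>2) * (real n * Bconst n) = 1"
    using Bconst_peak_radius[OF assms] by (simp add: algebra_simps)
  show "0 < real n * Bconst n"
    using assms Bconst_ge_1[OF assms] by simp
qed

lemma energy_le_Bconst_first_moment:
  assumes "1 \<le> n"
  shows "(\<Sum>k=1..n. real k * (b k)\<^sup>2) \<le> Bconst n * (\<Sum>k=1..n. real k * b k)"
  unfolding sum_distrib_left
proof (rule sum_mono)
  fix k assume k: "k \<in> {1..n}"
  then have "b k \<le> Bconst n"
    using coeff_le_Bconst Bconst_mono by (meson atLeastAtMost_iff order_trans)
  with k show "real k * (b k)\<^sup>2 \<le> Bconst n * (real k * b k)"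
    using coeff_nonneg[of k] by (simp add: power2_eq_square mult_right_mono algebra_simps)
qed

lemma energy_le:
  assumes "1 \<le> n"
  shows "(\<Sum>k=1..n. real k * (b k)\<^sup>2) \<le> real n * (Bconst n)\<^sup>2"
proof -
  have "(\<Sum>k=1..n. real k * (b k)\<^sup>2) \<le> Bconst n * (\<Sum>k=1..n. real k * b k)"
    using assms by (rule energy_le_Bconst_first_moment)
  also have "\<dots> \<le> Bconst n * (real n * Bconst n)"
    using assms Bconst_ge_1[OF assms] by (intro mult_left_mono first_moment_le) simp_all
  finally show ?thesis by (simp add: power2_eq_square algebra_simps)
qed

lemma coeff_eq_0_if_first_moment_extremal:
  assumes n: "2 \<le> n" and extremal: "real n * Bconst n \<le> (\<Sum>k=1..n. real k * b k)"
    and j: "1 \<le> j" "j \<noteq> n"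
  shows "b j = 0"
proof (rule ccontr)
  assume "b j \<noteq> 0"
  with coeff_nonneg[OF j(1)] have bj: "0 < b j" by simp
  define r where "r = peak_radius n"
  have r: "0 < r" "r < 1"
    using n peak_radius_pos peak_radius_less_1 by (auto simp: r_def)
  have r2: "0 < 1 - r\<^sup>2"
    using r by (simp add: power_less_one_iff abs_square_less_1)
  let ?U = "(\<Sum>k=1..n. real k * b k) * r ^ (n - 1)"
  let ?T = "\<Sum>k=1..n. real k * b k * r ^ (k - 1)"
  have "1 = (1 - r\<^sup>2) * (r ^ (n - 1) * (real n * Bconst n))"
    using Bconst_peak_radius[of n] n unfolding r_def by (simp add: mult_ac)
  also have "\<dots> \<le> (1 - r\<^sup>2) * ?U"
    using extremal r r2 by (simp add: mult.commute[of _ "r ^ (n - 1)"])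
  finally have U: "1 \<le> (1 - r\<^sup>2) * ?U" .
  have "(1 - r\<^sup>2) * ?U < 1"
  proof (cases "j < n")
    case True
    have "(1 - r\<^sup>2) * ?U < (1 - r\<^sup>2) * ?T"
      using first_moment_mult_power_less[OF r j(1) True bj] r2 by (rule mult_strict_left_mono)
    also have "\<dots> \<le> 1"
      using r by (intro weighted_coeff_sum_le) simp_all
    finally show ?thesis .
  next
    case False
    have "(1 - r\<^sup>2) * ?U \<le> (1 - r\<^sup>2) * ?T"
      using r r2 by (intro mult_left_mono first_moment_mult_power_le) simp_all
    also have "\<dots> < 1"
      using False j bj r by (intro weighted_coeff_sum_less) auto
    finally show ?thesis .
  qed
  with U show False by simp
qed

lemma energy_extremal:
  assumes n: "2 \<le> n" and extremal: "(\<Sum>k=1..n. real k * (b k)\<^sup>2) = real n * (Bconst n)\<^sup>2"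
  shows "\<And>j. 1 \<le> j \<Longrightarrow> j \<noteq> n \<Longrightarrow> b j = 0" and "b n = Bconst n"
proof -
  have B: "1 \<le> Bconst n" using n by (intro Bconst_ge_1) simp
  have "Bconst n * (real n * Bconst n) \<le> Bconst n * (\<Sum>k=1..n. real k * b k)"
    using extremal energy_le_Bconst_first_moment[of n] n by (simp add: power2_eq_square algebra_simps)
  then have "real n * Bconst n \<le> (\<Sum>k=1..n. real k * b k)"
    using B by simp
  then show zero: "\<And>j. 1 \<le> j \<Longrightarrow> j \<noteq> n \<Longrightarrow> b j = 0"
    using coeff_eq_0_if_first_moment_extremal[OF n] by simp
  have "(\<Sum>k=1..n. real k * (b k)\<^sup>2) = (\<Sum>k=1..n. if k = n then real n * (b n)\<^sup>2 else 0)"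
    by (rule sum.cong) (auto simp: zero)
  also have "\<dots> = real n * (b n)\<^sup>2"
    using n by simp
  finally have "(b n)\<^sup>2 = (Bconst n)\<^sup>2"
    using extremal n by simp
  then show "b n = Bconst n"
    using coeff_nonneg[of n] n B by (simp add: power2_eq_iff)
qed

end

theorem theorem2p2:
  fixes f :: "complex \<Rightarrow> complex" and b :: "nat \<Rightarrow> real" and n :: nat
  assumes "f holomorphic_on ball 0 1"
    and "b 0 = 0"
    and "\<And>z. z \<in> ball 0 1 \<Longrightarrow> (\<lambda>j. complex_of_real (b j) * z ^ j) sums f z"
    and "in_Bloch f"
    and "bloch_norm f \<le> 1"
    and "\<And>j. j \<ge> 1 \<Longrightarrow> b j \<ge> 0"
    and "n \<ge> 2"
  shows "(\<Sum>k=1..n. real k * \<bar>b k\<bar>\<^sup>2) \<le> real n * (Bconst n)\<^sup>2 \<and>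
         ((\<Sum>k=1..n. real k * \<bar>b k\<bar>\<^sup>2) = real n * (Bconst n)\<^sup>2 \<longrightarrow>
          (\<forall>z\<in>ball 0 1. f z = complex_of_real (Bconst n) * z ^ n))"
proof -
  interpret nonneg_Bloch_series f b
    using assms(3-6) by unfold_locales
  have "(\<Sum>k=1..n. real k * \<bar>b k\<bar>\<^sup>2) \<le> real n * (Bconst n)\<^sup>2"
    using energy_le assms(7) by simp
  moreover have "f z = complex_of_real (Bconst n) * z ^ n"
    if extremal: "(\<Sum>k=1..n. real k * \<bar>b k\<bar>\<^sup>2) = real n * (Bconst n)\<^sup>2" and z: "z \<in> ball 0 1" for z
  proof -
    have "(\<Sum>k=1..n. real k * (b k)\<^sup>2) = real n * (Bconst n)\<^sup>2"
      using extremal by simp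
    note coeffs = energy_extremal[OF assms(7) this]
    have "complex_of_real (b j) * z ^ j = (if j = n then complex_of_real (Bconst n) * z ^ j else 0)" for j
      using coeffs assms(2) by (cases "j = 0") auto
    then have "(\<lambda>j. if j = n then complex_of_real (Bconst n) * z ^ j else 0) sums f z"
      using sums_f[OF z] by simp
    moreover have "(\<lambda>j. if j = n then complex_of_real (Bconst n) * z ^ j else 0)
        sums (complex_of_real (Bconst n) * z ^ n)"
      by (rule sums_single)
    ultimately show ?thesis
      by (rule sums_unique2)
  qed
  ultimately show ?thesis
    by blast
qed

end
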